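(* The function $h$ satisfies $h(\emptyset)=0$ and, for every nonempty finite $L\subseteq\mathbb{N}$, $$h(L)=1+\max_{M\in S(L)}\min\{h(L\cap M),\,h(L\cap(M-1))\},$$ where $S(L)$ is the set of all finite $M\subseteq\mathbb{N}$ with $M\neq L$ and $0<|M|\le|L|$.
   Context: $\mathbb{N}=\{0,1,2,\ldots\}$. For a finite $L\subseteq\mathbb{N}$ and an integer $r$, write $L+r:=\{x+r: x\in L,\ x+r\ge 0\}$ (so $L-1=\{x-1:x\in L, x\ge1\}$). Define $h$ on finite subsets of $\mathbb{N}$ recursively on $|L|$: $h(\emptyset)=0$, and for $L\neq\emptyset$, $$h(L)=1+\max\Big\{h(L\cap(L+1)),\ \max_{M\in T(L)}\min\{h(L\cap M),\,h(L\cap(M-1))\}\Big\},$$ where $T(L)$ is the set of all finite $M\subseteq\mathbb{N}$ with $M\notin\{L,L+1\}$ and $0<|M|\le|L|$ (all sets $L\cap(L+1)$, $L\cap M$, $L\cap(M-1)$ appearing here have size less than $|L|$, so the recursion is well defined). *)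

theory Defs
  imports Main
begin

definition shift_up :: "nat set \<Rightarrow> nat set" where
  "shift_up L = {x + 1 | x. x \<in> L}"

definition shift_down :: "nat set \<Rightarrow> nat set" where
  "shift_down M = {x - 1 | x. x \<in> M \<and> x \<ge> 1}"

definition T_set :: "nat set \<Rightarrow> nat set set" where
  "T_set L = {M. finite M \<and> M \<noteq> L \<and> M \<noteq> shift_up L \<and> 0 < card M \<and> card M \<le> card L}"

definition S_set :: "nat set \<Rightarrow> nat set set" where
  "S_set L = {M. finite M \<and> M \<noteq> L \<and> 0 < card M \<and> card M \<le> card L}"

lemma card_inter_lt:
  assumes "finite L" "L \<noteq> {}" "M \<in> T_set L"
  shows "card (L \<inter> M) < card L"
proof -
  have "L \<inter> M \<noteq> L"
  proof
    assume "L \<inter> M = L"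
    hence "L \<subseteq> M" by auto
    moreover have "finite M" "card M \<le> card L" using assms(3) by (auto simp: T_set_def)
    ultimately have "M = L" using card_subset_eq card_mono le_antisym by metis
    thus False using assms(3) by (auto simp: T_set_def)
  qed
  thus ?thesis using assms(1) by (meson Int_lower1 card_mono le_neq_implies_less card_subset_eq)
qed

lemma card_shift_down_le: "finite M \<Longrightarrow> card (shift_down M) \<le> card M"
proof -
  assume "finite M"
  have "shift_down M = (\<lambda>x. x - 1) ` {x \<in> M. x \<ge> 1}" by (auto simp: shift_down_def)
  hence "card (shift_down M) \<le> card {x \<in> M. x \<ge> 1}" by (simp add: card_image_le \<open>finite M\<close>)
  also have "\<dots> \<le> card M" using \<open>finite M\<close> by (intro card_mono) auto
  finally show ?thesis .
qed

lemma card_inter_down_lt: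
  assumes "finite L" "L \<noteq> {}" "M \<in> T_set L"
  shows "card (L \<inter> shift_down M) < card L"
proof -
  have fM: "finite M" "card M \<le> card L" "M \<noteq> shift_up L" using assms(3) by (auto simp: T_set_def)
  have "L \<inter> shift_down M \<noteq> L"
  proof
    assume "L \<inter> shift_down M = L"
    hence sub: "L \<subseteq> shift_down M" by auto
    have fd: "finite (shift_down M)" using fM(1) unfolding shift_down_def by simp
    have "card (shift_down M) \<le> card L" using card_shift_down_le[OF fM(1)] fM(2) by simp
    hence eq: "shift_down M = L" using sub fd card_subset_eq card_mono le_antisym by metis
    define D where "D = {x \<in> M. x \<ge> 1}"
    have fD: "finite D" using fM(1) by (simp add: D_def)
    have img: "shift_down M = (\<lambda>x. x - 1) ` D" by (auto simp: shift_down_def D_def)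
    have "inj_on (\<lambda>x. x - 1) D" by (auto simp: inj_on_def D_def)
    hence cD: "card (shift_down M) = card D" using img card_image by metis
    have "0 \<notin> M"
    proof
      assume "0 \<in> M"
      hence "D \<subset> M" by (auto simp: D_def)
      hence "card D < card M" using fM(1) psubset_card_mono by blast
      thus False using cD eq fM(2) by simp
    qed
    hence DM: "D = M" by (auto simp: D_def Suc_le_eq intro: gr0I)
    have "shift_up L = (\<lambda>x. x + 1) ` ((\<lambda>x. x - 1) ` D)" using eq img by (auto simp: shift_up_def)
    also have "\<dots> = D" by (force simp: D_def image_image)
    finally have "shift_up L = M" using DM by simp
    thus False using fM(3) by simp
  qed
  thus ?thesis using assms(1) by (meson Int_lower1 card_mono le_neq_implies_less card_subset_eq)
qed

lemma card_inter_up_lt: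
  assumes "finite L" "L \<noteq> {}"
  shows "card (L \<inter> shift_up L) < card L"
proof -
  have "L \<inter> shift_up L \<noteq> L"
  proof
    assume "L \<inter> shift_up L = L"
    hence "Min L \<in> shift_up L" using assms Min_in by blast
    then obtain x where "x \<in> L" "Min L = x + 1" by (auto simp: shift_up_def)
    thus False using Min_le[OF assms(1) \<open>x \<in> L\<close>] by simp
  qed
  thus ?thesis using assms(1) by (meson Int_lower1 card_mono le_neq_implies_less card_subset_eq)
qed

function h :: "nat set \<Rightarrow> nat" where
  "h L = (if finite L \<and> L \<noteq> {} then
      1 + max (h (L \<inter> shift_up L))
              (Max ((\<lambda>M. min (h (L \<inter> M)) (h (L \<inter> shift_down M))) ` T_set L))
    else 0)"
  by auto
termination
  by (relation "measure card")
     (auto intro: card_inter_lt card_inter_down_lt card_inter_up_lt)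

declare h.simps[simp del]

end

theory Submission
  imports Defs
begin

(* The defining recursion of h takes the maximum of h(L \<inter> (L+1)) and of the
   values  v_L(M) = min {h (L \<inter> M), h (L \<inter> (M - 1))}  over M \<in> T(L).
   The index set S(L) of the statement is exactly T(L) together with the one
   extra set M = L + 1 (which lies in S(L) because it has the size of L and
   differs from L).  Since (L + 1) - 1 = L, the extra value is
   v_L(L+1) = min {h (L \<inter> (L+1)), h L}, and as the recursion shows
   h (L \<inter> (L+1)) < h L, this minimum is h (L \<inter> (L+1)).  Hence the maximum
   over S(L) equals the maximum in the recursion. *)

lemma shift_up_eq_image: "shift_up L = (\<lambda>x. x + 1) ` L"
  by (auto simp: shift_up_def)

lemma shift_down_shift_up: "shift_down (shift_up L) = L"
  by (force simp: shift_down_def shift_up_def)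

lemma card_shift_up: "card (shift_up L) = card L"
  by (simp add: shift_up_eq_image card_image)

lemma finite_shift_up: "finite L \<Longrightarrow> finite (shift_up L)"
  by (simp add: shift_up_eq_image)

(* A nonempty finite set is not invariant under the shift (its minimum is lost). *)
lemma shift_up_neq: "finite L \<Longrightarrow> L \<noteq> {} \<Longrightarrow> shift_up L \<noteq> L"
  using card_inter_up_lt by fastforce

lemma S_set_eq_insert_T_set:
  assumes "finite L" "L \<noteq> {}"
  shows "S_set L = insert (shift_up L) (T_set L)"
proof -
  have "0 < card L" using assms by (simp add: card_gt_0_iff)
  hence "shift_up L \<in> S_set L"
    using assms shift_up_neq finite_shift_up card_shift_up by (simp add: S_set_def)
  thus ?thesis by (auto simp: S_set_def T_set_def)
qed

(* T(L) is nonempty: any singleton outside L \<union> (L + 1) belongs to it.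
   This makes the maximum over T(L) in the recursion meaningful. *)
lemma T_set_nonempty:
  assumes "finite L" "L \<noteq> {}"
  shows "T_set L \<noteq> {}"
proof -
  have "finite (L \<union> shift_up L)" using assms(1) finite_shift_up by simp
  then obtain x :: nat where x: "x \<notin> L \<union> shift_up L"
    using ex_new_if_finite[OF infinite_UNIV_nat] by blast
  hence "{x} \<noteq> L" "{x} \<noteq> shift_up L" by auto
  moreover have "1 \<le> card L" using assms by (simp add: Suc_le_eq card_gt_0_iff)
  ultimately have "{x} \<in> T_set L" by (simp add: T_set_def)
  thus ?thesis by blast
qed

(* The value v_L(M) only depends on two subsets of L, so over any family of
   sets M it takes finitely many values. *)
lemma finite_values:
  assumes "finite L"
  shows "finite ((\<lambda>M. min (h (L \<inter> M)) (h (L \<inter> shift_down M))) ` \<M>)"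
proof (rule finite_subset)
  show "(\<lambda>M. min (h (L \<inter> M)) (h (L \<inter> shift_down M))) ` \<M>
          \<subseteq> (\<lambda>(A, B). min (h A) (h B)) ` (Pow L \<times> Pow L)"
  proof (rule image_subsetI)
    fix M
    show "min (h (L \<inter> M)) (h (L \<inter> shift_down M))
            \<in> (\<lambda>(A, B). min (h A) (h B)) ` (Pow L \<times> Pow L)"
      by (rule rev_image_eqI[of "(L \<inter> M, L \<inter> shift_down M)"]) auto
  qed
  show "finite ((\<lambda>(A, B). min (h A) (h B)) ` (Pow L \<times> Pow L))"
    using assms by simp
qed

lemma h_rec:
  assumes "finite L" "L \<noteq> {}"
  shows "h L = 1 + max (h (L \<inter> shift_up L))
                   (Max ((\<lambda>M. min (h (L \<inter> M)) (h (L \<inter> shift_down M))) ` T_set L))"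
  using assms by (subst h.simps) simp

(* The candidate M = L + 1 contributes exactly h (L \<inter> (L + 1)):
   its second argument is h L, which is strictly larger by the recursion. *)
lemma value_at_shift_up:
  assumes "finite L" "L \<noteq> {}"
  shows "min (h (L \<inter> shift_up L)) (h (L \<inter> shift_down (shift_up L))) = h (L \<inter> shift_up L)"
proof -
  have "h (L \<inter> shift_up L) < h L" using h_rec[OF assms] by simp
  thus ?thesis by (simp add: shift_down_shift_up)
qed

theorem proposition12:
  shows "h {} = 0 \<and>
    (\<forall>L::nat set. finite L \<and> L \<noteq> {} \<longrightarrow>
       h L = 1 + Max ((\<lambda>M. min (h (L \<inter> M)) (h (L \<inter> shift_down M))) ` S_set L))"
proof (intro conjI allI impI)
  show "h {} = 0" by (simp add: h.simps)
next
  fix L :: "nat set"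
  assume "finite L \<and> L \<noteq> {}"
  hence L: "finite L" "L \<noteq> {}" by auto
  define v where "v = (\<lambda>M. min (h (L \<inter> M)) (h (L \<inter> shift_down M)))"
  have "Max (v ` S_set L) = Max (insert (v (shift_up L)) (v ` T_set L))"
    using S_set_eq_insert_T_set[OF L] by simp
  also have "\<dots> = max (h (L \<inter> shift_up L)) (Max (v ` T_set L))"
    using finite_values[OF L(1)] T_set_nonempty[OF L] value_at_shift_up[OF L]
    by (simp add: v_def)
  finally show "h L = 1 + Max (v ` S_set L)"
    using h_rec[OF L] by (simp add: v_def)
qed

end
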